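(* Let $R$ be a commutative Bezout domain and let $\Phi=\mathrm{diag}(\varphi_1,\dots,\varphi_t,0,\dots,0)$ be an $n\times n$ $d$-matrix with $\varphi_t\neq0$. Then $\mathbf G_\Phi$ consists exactly of the invertible $n\times n$ matrices $H=(h_{ij})$ such that $h_{ij}=0$ for all $i>t$, $j\le t$, and $\frac{\varphi_i}{\varphi_j}\mid h_{ij}$ for all $1\le j<i\le t$; i.e. $H=\begin{pmatrix}H_1&*\\0&H_2\end{pmatrix}$ with $H_2\in GL_{n-t}(R)$ and $H_1$ a $t\times t$ matrix whose entry in position $(i,j)$, $i>j$, has the form $\frac{\varphi_i}{\varphi_j}h'_{ij}$.
   Context: A commutative Bezout domain is a commutative integral domain with $1\ne0$ in which every finitely generated ideal is principal. A $d$-matrix is a diagonal matrix $\mathrm{diag}(\varphi_1,\dots)$ with $\varphi_i\mid\varphi_{i+1}$. For an $n\times n$ $d$-matrix $\Phi$, the Zelisko group is $\mathbf G_\Phi=\{H\in GL_n(R):\ \exists K\in GL_n(R),\ H\Phi=\Phi K\}$. *)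

theory Defs
  imports "Jordan_Normal_Form.Matrix"
begin

text \<open>A commutative Bezout domain: an integral domain (type class idom, which
includes commutativity and 1 \<noteq> 0) in which every finitely generated ideal is
principal.\<close>
definition bezout_domain :: "'a::idom itself \<Rightarrow> bool" where
  "bezout_domain _ \<longleftrightarrow>
     (\<forall>xs :: 'a list. \<exists>d.
        {(\<Sum>i<length xs. c i * xs ! i) | c. True} = {d * z | z. True})"

text \<open>The n x n diagonal matrix diag(phi 0, ..., phi (t-1), 0, ..., 0) (0-indexed).\<close>
definition dmat :: "nat \<Rightarrow> nat \<Rightarrow> (nat \<Rightarrow> 'a::idom) \<Rightarrow> 'a mat" where
  "dmat n t \<phi> = mat n n (\<lambda>(i, j). if i = j \<and> i < t then \<phi> i else 0)"

definition zelisko_group :: "nat \<Rightarrow> 'a::idom mat \<Rightarrow> 'a mat set" where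
  "zelisko_group n \<Phi> =
     {H \<in> carrier_mat n n. invertible_mat H \<and>
        (\<exists>K \<in> carrier_mat n n. invertible_mat K \<and> H * \<Phi> = \<Phi> * K)}"

end

theory Submission
  imports Defs "Jordan_Normal_Form.Determinant"
begin

text \<open>Write D for the diagonal matrix of Phi. Comparing entries, H D = D K says exactly
  h_ij phi_j = phi_i k_ij, with phi_i = 0 for i >= t. Since phi_j is nonzero for j < t, this
  forces the zero lower left block, and phi_i / phi_j divides h_ij below the diagonal because
  phi_j divides phi_i. Conversely these conditions let one solve for K entrywise, putting an
  identity block in the lower right corner. K is then conjugate to the upper left block H_1 of H
  by a nonsingular diagonal matrix, so det K = det H_1, which divides the unit det H; hence
  K is invertible. No Bezout property is needed: the argument works over any integral domain.\<close>

lemma dmat_eq_mat_diag: "dmat n t \<phi> = mat_diag n (\<lambda>i. if i < t then \<phi> i else 0)"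
  unfolding dmat_def mat_diag_def by (rule eq_matI) auto

lemma mult_mat_diag_commute_iff:
  assumes "A \<in> carrier_mat n n" "B \<in> carrier_mat n n"
  shows "A * mat_diag n d = mat_diag n d * B \<longleftrightarrow>
    (\<forall>i<n. \<forall>j<n. A $$ (i, j) * d j = d i * B $$ (i, j))"
  using assms by (auto simp: mat_diag_mult_left mat_diag_mult_right mat_eq_iff)

lemma det_mat_diag: "det (mat_diag n f) = (\<Prod>i<n. f i)"
proof -
  have "upper_triangular (mat_diag n f)"
    unfolding upper_triangular_def mat_diag_def by auto
  then have "det (mat_diag n f) = prod_list (diag_mat (mat_diag n f))"
    using det_upper_triangular mat_diag_dim by blast
  also have "\<dots> = (\<Prod>i<n. f i)"
    by (simp add: diag_mat_def mat_diag_def prod.list_conv_set_nth lessThan_atLeast0)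
  finally show ?thesis .
qed

lemma det_eq_if_intertwined:
  fixes A B P :: "'a::idom mat"
  assumes "A \<in> carrier_mat n n" "B \<in> carrier_mat n n" "P \<in> carrier_mat n n"
    and "A * P = P * B" "det P \<noteq> 0"
  shows "det A = det B"
proof -
  have "det A * det P = det B * det P"
    using det_mult[of A n P] det_mult[of P n B] assms by (simp add: mult.commute)
  then show ?thesis using \<open>det P \<noteq> 0\<close> by simp
qed

lemma invertible_mat_iff_det_dvd_one:
  fixes A :: "'a::comm_ring_1 mat"
  assumes A: "A \<in> carrier_mat n n"
  shows "invertible_mat A \<longleftrightarrow> det A dvd 1"
proof
  assume "invertible_mat A"
  then obtain B where AB: "A * B = 1\<^sub>m n" and BA: "B * A = 1\<^sub>m (dim_row B)"
    using A unfolding invertible_mat_def inverts_mat_def by auto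
  have B: "B \<in> carrier_mat n n"
    using arg_cong[OF AB, of dim_col] arg_cong[OF BA, of dim_col] A by auto
  have "det A * det B = 1" using det_mult[OF A B] AB by simp
  then show "det A dvd 1" by (metis dvd_triv_left)
next
  assume "det A dvd 1"
  then obtain u where u: "u * det A = 1" by (metis dvdE mult.commute)
  define B where "B = u \<cdot>\<^sub>m adj_mat A"
  have B: "B \<in> carrier_mat n n" using adj_mat[OF A] B_def by simp
  have "A * B = u \<cdot>\<^sub>m (A * adj_mat A)" "B * A = u \<cdot>\<^sub>m (adj_mat A * A)"
    unfolding B_def using adj_mat[OF A] A by (simp_all add: mult_smult_distrib mult_smult_assoc_mat)
  then have "A * B = 1\<^sub>m n" "B * A = 1\<^sub>m n"
    using adj_mat[OF A] u by (auto intro!: eq_matI simp: mult.assoc[symmetric])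
  then show "invertible_mat A" unfolding invertible_mat_def inverts_mat_def
    using A B by auto
qed

definition upper_left_block :: "nat \<Rightarrow> nat \<Rightarrow> 'a::zero_neq_one mat \<Rightarrow> 'a mat" where
  "upper_left_block n t H =
     mat n n (\<lambda>(i, j). if i < t \<and> j < t then H $$ (i, j) else if i = j then 1 else 0)"

lemma det_upper_left_block_dvd:
  fixes H :: "'a::comm_ring_1 mat"
  assumes H: "H \<in> carrier_mat n n"
    and lower_left_zero: "\<And>i j. t \<le> i \<Longrightarrow> i < n \<Longrightarrow> j < t \<Longrightarrow> H $$ (i, j) = 0"
  shows "det (upper_left_block n t H) dvd det H"
proof -
  define E where "E = mat n n (\<lambda>(i, j). if j < t then (if i = j then 1 else 0) else H $$ (i, j))"
  have E: "E \<in> carrier_mat n n" unfolding E_def by simp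
  have "H = E * upper_left_block n t H"
  proof (rule eq_matI)
    fix i j assume "i < dim_row (E * upper_left_block n t H)" "j < dim_col (E * upper_left_block n t H)"
    then have ij: "i < n" "j < n" by (auto simp: E_def upper_left_block_def)
    have "(E * upper_left_block n t H) $$ (i, j) =
        (\<Sum>k\<in>{0..<n}. E $$ (i, k) * upper_left_block n t H $$ (k, j))"
      using ij by (simp add: E_def upper_left_block_def scalar_prod_def)
    also have "\<dots> = (\<Sum>k\<in>{0..<n}. if k = (if j < t then i else j) then H $$ (i, j) else 0)"
      by (rule sum.cong) (use ij lower_left_zero[of i j] in \<open>auto simp: E_def upper_left_block_def\<close>)
    finally have "(E * upper_left_block n t H) $$ (i, j) = H $$ (i, j)" using ij by simp
    then show "H $$ (i, j) = (E * upper_left_block n t H) $$ (i, j)" by (rule sym)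
  qed (use H in \<open>auto simp: E_def upper_left_block_def\<close>)
  then have "det H = det E * det (upper_left_block n t H)"
    using det_mult[OF E, of "upper_left_block n t H"] by (simp add: upper_left_block_def)
  then show ?thesis by simp
qed

lemma dvd_chain:
  fixes \<phi> :: "nat \<Rightarrow> 'a::comm_monoid_mult"
  assumes "\<And>i. Suc i < t \<Longrightarrow> \<phi> i dvd \<phi> (Suc i)" and "j \<le> i" "i < t"
  shows "\<phi> j dvd \<phi> i"
  using assms(2,3)
proof (induction i rule: dec_induct)
  case (step m)
  then have "\<phi> j dvd \<phi> m" by simp
  then show ?case using assms(1)[OF \<open>Suc m < t\<close>] by (rule dvd_trans)
qed simp

lemma zelisko_group_dmat_imp_block_form:
  fixes \<phi> :: "nat \<Rightarrow> 'a::idom"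
  assumes chain: "\<And>i. Suc i < t \<Longrightarrow> \<phi> i dvd \<phi> (Suc i)"
    and nonzero: "\<And>j. j < t \<Longrightarrow> \<phi> j \<noteq> 0"
    and "t \<le> n" and "H \<in> zelisko_group n (dmat n t \<phi>)"
  shows "\<And>i j. t \<le> i \<Longrightarrow> i < n \<Longrightarrow> j < t \<Longrightarrow> H $$ (i, j) = 0"
    and "\<And>i j. j < i \<Longrightarrow> i < t \<Longrightarrow> \<exists>q. \<phi> i = q * \<phi> j \<and> q dvd H $$ (i, j)"
proof -
  obtain K where "H \<in> carrier_mat n n" "K \<in> carrier_mat n n" "H * dmat n t \<phi> = dmat n t \<phi> * K"
    using assms(4) unfolding zelisko_group_def by auto
  then have entry: "H $$ (i, j) * (if j < t then \<phi> j else 0) = (if i < t then \<phi> i else 0) * K $$ (i, j)"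
    if "i < n" "j < n" for i j
    using that by (simp add: dmat_eq_mat_diag mult_mat_diag_commute_iff)
  show "H $$ (i, j) = 0" if "t \<le> i" "i < n" "j < t" for i j
    using entry[of i j] nonzero[of j] that \<open>t \<le> n\<close> by simp
  show "\<exists>q. \<phi> i = q * \<phi> j \<and> q dvd H $$ (i, j)" if "j < i" "i < t" for i j
  proof -
    have "\<phi> j dvd \<phi> i" using dvd_chain[where \<phi> = \<phi> and t = t, OF chain, of j i] that by simp
    then obtain q where q: "\<phi> i = q * \<phi> j" by (metis dvdE mult.commute)
    have "H $$ (i, j) * \<phi> j = (q * K $$ (i, j)) * \<phi> j"
      using entry[of i j] q that \<open>t \<le> n\<close> by (simp add: ac_simps)
    then have "H $$ (i, j) = q * K $$ (i, j)" using nonzero[of j] that by simp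
    then show ?thesis using q by auto
  qed
qed

lemma block_form_in_zelisko_group_dmat:
  fixes \<phi> :: "nat \<Rightarrow> 'a::idom"
  assumes chain: "\<And>i. Suc i < t \<Longrightarrow> \<phi> i dvd \<phi> (Suc i)"
    and nonzero: "\<And>j. j < t \<Longrightarrow> \<phi> j \<noteq> 0"
    and H: "H \<in> carrier_mat n n" "invertible_mat H"
    and lower_left_zero: "\<And>i j. t \<le> i \<Longrightarrow> i < n \<Longrightarrow> j < t \<Longrightarrow> H $$ (i, j) = 0"
    and quotient_dvd: "\<And>i j. j < i \<Longrightarrow> i < t \<Longrightarrow> \<exists>q. \<phi> i = q * \<phi> j \<and> q dvd H $$ (i, j)"
  shows "H \<in> zelisko_group n (dmat n t \<phi>)"
proof -
  have "\<exists>k. H $$ (i, j) * \<phi> j = \<phi> i * k" if "i < t" "j < t" for i j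
  proof (cases "j < i")
    case True
    then obtain q c where "\<phi> i = q * \<phi> j" "H $$ (i, j) = q * c"
      using quotient_dvd \<open>i < t\<close> by (meson dvdE)
    then show ?thesis by (intro exI[of _ c]) (simp add: ac_simps)
  next
    case False
    then have "\<phi> i dvd \<phi> j" using dvd_chain[where \<phi> = \<phi> and t = t, OF chain] \<open>j < t\<close> by simp
    then obtain r where "\<phi> j = \<phi> i * r" by (rule dvdE)
    then show ?thesis by (intro exI[of _ "r * H $$ (i, j)"]) (simp add: ac_simps)
  qed
  then obtain k where k: "\<And>i j. i < t \<Longrightarrow> j < t \<Longrightarrow> H $$ (i, j) * \<phi> j = \<phi> i * k i j"
    by metis
  define K where "K = upper_left_block n t (mat n n (\<lambda>(i, j). k i j))"
  have K: "K \<in> carrier_mat n n" by (simp add: K_def upper_left_block_def)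
  have HK: "H * dmat n t \<phi> = dmat n t \<phi> * K"
    unfolding dmat_eq_mat_diag mult_mat_diag_commute_iff[OF H(1) K]
    using k lower_left_zero by (auto simp: K_def upper_left_block_def)
  have U: "upper_left_block n t H \<in> carrier_mat n n" by (simp add: upper_left_block_def)
  define e where "e i = (if i < t then \<phi> i else 1)" for i
  have "upper_left_block n t H * mat_diag n e = mat_diag n e * K"
    unfolding mult_mat_diag_commute_iff[OF U K]
    using k by (auto simp: K_def upper_left_block_def e_def)
  moreover have "det (mat_diag n e) \<noteq> 0"
    using nonzero by (simp add: det_mat_diag e_def)
  ultimately have "det K = det (upper_left_block n t H)"
    by (intro det_eq_if_intertwined[OF U K, symmetric]) auto
  also have "\<dots> dvd det H" using det_upper_left_block_dvd[OF H(1) lower_left_zero] .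
  also have "\<dots> dvd 1" using H invertible_mat_iff_det_dvd_one by blast
  finally have "invertible_mat K" using invertible_mat_iff_det_dvd_one[OF K] by simp
  then show ?thesis using H K HK unfolding zelisko_group_def by auto
qed

theorem theorem2p7:
  fixes \<phi> :: "nat \<Rightarrow> 'a::idom" and n t :: nat
  assumes "bezout_domain TYPE('a)"
    and "1 \<le> t" and "t \<le> n"
    and "\<And>i. Suc i < t \<Longrightarrow> \<phi> i dvd \<phi> (Suc i)"
    and "\<phi> (t - 1) \<noteq> 0"
  shows "zelisko_group n (dmat n t \<phi>) =
    {H \<in> carrier_mat n n. invertible_mat H \<and>
       (\<forall>i j. t \<le> i \<longrightarrow> i < n \<longrightarrow> j < t \<longrightarrow> H $$ (i, j) = 0) \<and>
       (\<forall>i j. j < i \<longrightarrow> i < t \<longrightarrow> (\<exists>q. \<phi> i = q * \<phi> j \<and> q dvd H $$ (i, j)))}"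
proof -
  have nonzero: "\<phi> j \<noteq> 0" if "j < t" for j
  proof -
    have "\<phi> j dvd \<phi> (t - 1)"
      using dvd_chain[where \<phi> = \<phi> and t = t, OF assms(4), of j "t - 1"] that by simp
    then show ?thesis using assms(5) by auto
  qed
  show ?thesis
  proof (intro Set.set_eqI iffI)
    fix H assume "H \<in> zelisko_group n (dmat n t \<phi>)"
    with zelisko_group_dmat_imp_block_form[where \<phi> = \<phi> and t = t, OF assms(4) nonzero assms(3)]
    show "H \<in> {H \<in> carrier_mat n n. invertible_mat H \<and>
       (\<forall>i j. t \<le> i \<longrightarrow> i < n \<longrightarrow> j < t \<longrightarrow> H $$ (i, j) = 0) \<and>
       (\<forall>i j. j < i \<longrightarrow> i < t \<longrightarrow> (\<exists>q. \<phi> i = q * \<phi> j \<and> q dvd H $$ (i, j)))}"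
      by (auto simp: zelisko_group_def)
  qed (use block_form_in_zelisko_group_dmat[where \<phi> = \<phi> and t = t, OF assms(4) nonzero] in blast)
qed

end
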